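(* Assume (H1), (H2) and (H3) from the context hold, and that $\partial_if_j(u)\ge0$ for $i\ne j$ and $u\in[0,k]$. Then $\mathcal{T}$ is monotone on $\mathcal{A}$: if $u,v\in\mathcal{A}$ with $u\le v$ on $\mathbb{R}$, then $\mathcal{T}[u]\le\mathcal{T}[v]$ on $\mathbb{R}$. Consequently $\mathcal{T}(\mathcal{A})\subseteq\mathcal{A}$. Furthermore, if $u\in\mathcal{A}$ and every component $u_i$ is nondecreasing on $\mathbb{R}$, then every $\mathcal{T}_i[u]$ is nondecreasing on $\mathbb{R}$.
   Context: Let $N\ge1$ and $D=\mathrm{diag}(d_1,\dots,d_N)$ with $d_i>0$. Vector inequalities are componentwise; $u\gg0$ means all components positive; $[0,r]=\{u:0\le u\le r\}$; $\mathcal{C}_r$ is the set of continuous $\mathbb{R}\to[0,r]$ maps. (H1) - $k^+\gg0$; $f:[0,k^+]\to\mathbb{R}^N$ is continuous and piecewise twice continuously differentiable; solutions of $u_t=Du_{xx}+f(u)$ with data in $\mathcal{C}_{k^+}$ exist globally in $\mathcal{C}_{k^+}$. - $0\ll k^-\le k\le k^+$; continuous piecewise $C^2$ maps $f^\pm:[0,k^\pm]\to\mathbb{R}^N$ satisfy $f^-\le f\le f^+$ on $[0,k^+]$. - $f(0)=f(k)=0$, $f^\pm(0)=f^\pm(k^\pm)=0$, with no other positive equilibria between $0$ and $k$, respectively $k^\pm$. - $f^\pm$ are cooperative on $[0,k^\pm]$ and share with $f$ the Jacobian $f'(0)$ at $0$. - In the cooperative case, $f^\pm=f$ and $k^\pm=k$.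 (H2) - $A_\lambda=(a^{ij}_\lambda)=\mathrm{diag}(d_i\lambda^2)+f'(0)$ is block lower triangular for $\lambda>0$, with irreducible or $1\times1$ zero diagonal blocks. - Its first block has positive principal eigenvalue $\Psi(A_\lambda)$ (where $\Psi(A)=\rho(A+\alpha I)-\alpha$), strictly larger than those of the other blocks. - An eigenvector $\nu_\lambda=(\nu^i_\lambda)\gg0$ for $\Psi(A_\lambda)$ exists and is continuous in $\lambda$. Speeds. $\Phi(\lambda)=\Psi(A_\lambda)/\lambda$ and $c^*=\inf_{\lambda>0}\Phi$. (H3) $f^\pm(\alpha\nu_\lambda)\le\alpha f'(0)\nu_\lambda$ for all $\alpha,\lambda>0$. Setup. Fix $c>c^*$, and let $\Lambda_c$ be the smallest positive solution of $\Phi(\lambda)=c$. The operator $\mathcal{T}$. $\beta>\max\{|\partial_if_j(u)|:u\in[0,k^+]\}$ is a fixed, sufficiently large constant. Set $\lambda_{1i}=\frac{-c+\sqrt{c^2+4\beta d_i}}{2d_i}$ and $\lambda_{2i}=\frac{c+\sqrt{c^2+4\beta d_i}}{2d_i}$, with $\lambda_{2i}>\lambda_{1i}>2\Lambda_c$. Let $H_i(u)=\beta u_i+f_i(u)$ and $$\mathcal{T}_i[u](\xi)=\frac{1}{d_i(\lambda_{1i}+\lambda_{2i})}\Big(\int_{-\infty}^{\xi}e^{-\lambda_{1i}(\xi-s)}H_i(u(s))ds+\int_{\xi}^{\infty}e^{\lambda_{2i}(\xi-s)}H_i(u(s))ds\Big).$$ Upper and lower solutions. Let $\phi^+_i(\xi)=\min\{k_i,\nu^i_{\Lambda_c}e^{\Lambda_c\xi}\}$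 and $\phi^-_i(\xi)=\max\{0,\nu^i_{\Lambda_c}e^{\Lambda_c\xi}-q\nu^i_{\gamma\Lambda_c}e^{\gamma\Lambda_c\xi}\}$. Here $\gamma\in(1,2)$ satisfies $\Phi(\gamma\Lambda_c)<c$ and $\beta\nu^i_{\gamma\Lambda_c}-\nu^i_{\gamma\Lambda_c}d_i(\gamma\Lambda_c)^2+\sum_j\nu^j_{\gamma\Lambda_c}a^{ij}_{\gamma\Lambda_c}>0$ for all $i$. The constant $q>1$ is fixed so large that $\phi^-<\phi^+$ and $\mathcal{T}_i[\phi^-]\ge\phi^-_i$ on $\mathbb{R}$; and $\mathcal{T}_i[\phi^+]\le\phi^+_i$ on $\mathbb{R}$. The space $\mathcal{A}$. Fix $0<\varrho<\Lambda_c$. Let $\mathcal{E}_\varrho$ be the Banach space of continuous $u:\mathbb{R}\to\mathbb{R}^N$ with $\|u\|_\varrho=\sum_i\sup_\xi|u_i(\xi)|e^{-\varrho\xi}<\infty$, and $$\mathcal{A}=\{u\in\mathcal{E}_\varrho:\phi^-_i\le u_i\le\phi^+_i \text{ on }\mathbb{R}\text{ for all }i\}.$$ *)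

theory Defs
  imports "HOL-Analysis.Analysis"
begin

text \<open>Vectors in R^N are modelled as real^'n, with N = CARD('n).
  The order on real^'n is componentwise; the box [0,r] is {0..r}.\<close>

definition pos_vec :: "real^'n \<Rightarrow> bool" where
  "pos_vec u \<longleftrightarrow> (\<forall>i. u $ i > 0)"

definition C2_on :: "(real^'n) set \<Rightarrow> (real^'n \<Rightarrow> real^'n) \<Rightarrow> bool" where
  "C2_on U g \<longleftrightarrow>
     (\<exists>(g1 :: (real^'n) \<Rightarrow> ((real^'n) \<Rightarrow>\<^sub>L (real^'n)))
        (g2 :: (real^'n) \<Rightarrow> ((real^'n) \<Rightarrow>\<^sub>L ((real^'n) \<Rightarrow>\<^sub>L (real^'n)))).
        (\<forall>x\<in>U. (g has_derivative blinfun_apply (g1 x)) (at x)) \<and>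
        (\<forall>x\<in>U. (g1 has_derivative blinfun_apply (g2 x)) (at x)) \<and>
        continuous_on U g2)"

definition pw_C2_on :: "(real^'n) set \<Rightarrow> (real^'n \<Rightarrow> real^'n) \<Rightarrow> bool" where
  "pw_C2_on S f \<longleftrightarrow>
     (\<exists>F :: ((real^'n) set \<times> (real^'n \<Rightarrow> real^'n)) set.
        finite F \<and> S = \<Union>(fst ` F) \<and>
        (\<forall>(P, g)\<in>F. closed P \<and> closure (interior P) = P \<and>
            (\<exists>U. open U \<and> P \<subseteq> U \<and> C2_on U g \<and> (\<forall>x\<in>P. f x = g x))))"

definition pderiv_at :: "(real^'n \<Rightarrow> real^'n) \<Rightarrow> (real^'n \<Rightarrow> real^'n) \<Rightarrow> 'n \<Rightarrow> 'n \<Rightarrow> real" where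
  "pderiv_at L f i j = L (axis i 1) $ j"

definition cooperative_on :: "(real^'n) set \<Rightarrow> (real^'n) set \<Rightarrow> (real^'n \<Rightarrow> real^'n) \<Rightarrow> bool" where
  "cooperative_on S T f \<longleftrightarrow>
     (\<forall>u\<in>T. \<forall>L. (f has_derivative L) (at u within S) \<longrightarrow>
        (\<forall>i j. i \<noteq> j \<longrightarrow> L (axis i 1) $ j \<ge> 0))"

text \<open>Global existence in C_r of classical solutions of u_t = D u_xx + f(u).\<close>
definition pde_global_solvable :: "real^'n \<Rightarrow> (real^'n \<Rightarrow> real^'n) \<Rightarrow> real^'n \<Rightarrow> bool" where
  "pde_global_solvable d f r \<longleftrightarrow>
     (\<forall>u0 :: real \<Rightarrow> real^'n. continuous_on UNIV u0 \<and> (\<forall>x. u0 x \<in> {0..r}) \<longrightarrow>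
       (\<exists>u :: real \<Rightarrow> real \<Rightarrow> real^'n.
          (\<forall>x. u 0 x = u0 x) \<and>
          (\<forall>x. ((\<lambda>t. u t x) \<longlongrightarrow> u0 x) (at_right 0)) \<and>
          (\<forall>t\<ge>0. continuous_on UNIV (u t) \<and> (\<forall>x. u t x \<in> {0..r})) \<and>
          (\<forall>t>0. \<forall>x. \<forall>i. \<exists>ux uxx.
              (\<forall>y. ((\<lambda>y. u t y $ i) has_real_derivative ux y) (at y)) \<and>
              (ux has_real_derivative uxx) (at x) \<and>
              ((\<lambda>s. u s x $ i) has_real_derivative (d $ i * uxx + f (u t x) $ i)) (at t))))"

text \<open>Spectral radius of the principal submatrix of M on the index set S
  (maximal modulus of its complex eigenvalues).\<close>
definition spec_rad_on :: "'n set \<Rightarrow> real^'n^'n \<Rightarrow> real" where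
  "spec_rad_on S M = Max {cmod z | z. \<exists>v :: complex^'n. v \<noteq> 0 \<and> (\<forall>i. i \<notin> S \<longrightarrow> v $ i = 0) \<and>
       (\<forall>i\<in>S. (\<Sum>j\<in>S. complex_of_real (M $ i $ j) * v $ j) = z * v $ i)}"

text \<open>Psi(A) = rho(A + alpha I) - alpha, alpha chosen large (here the sum of absolute entries,
  which makes A + alpha I nonnegative for matrices with nonnegative off-diagonal entries),
  applied to the principal submatrix on S.\<close>
definition Psi_on :: "'n set \<Rightarrow> real^'n^'n \<Rightarrow> real" where
  "Psi_on S A = (let \<alpha> = (\<Sum>i\<in>UNIV. \<Sum>j\<in>UNIV. \<bar>A $ i $ j\<bar>) in
      spec_rad_on S (\<chi> i j. A $ i $ j + (if i = j then \<alpha> else 0)) - \<alpha>)"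

definition Psi :: "real^'n^'n \<Rightarrow> real" where
  "Psi A = Psi_on UNIV A"

definition Amat :: "real^'n \<Rightarrow> real^'n^'n \<Rightarrow> real \<Rightarrow> real^'n^'n" where
  "Amat d J lam = (\<chi> i j. (if i = j then d $ i * lam\<^sup>2 else 0) + J $ i $ j)"

definition Phi :: "real^'n \<Rightarrow> real^'n^'n \<Rightarrow> real \<Rightarrow> real" where
  "Phi d J lam = Psi (Amat d J lam) / lam"

definition cstar :: "real^'n \<Rightarrow> real^'n^'n \<Rightarrow> real" where
  "cstar d J = Inf (Phi d J ` {0<..})"

definition lam1 :: "real^'n \<Rightarrow> real \<Rightarrow> real \<Rightarrow> 'n \<Rightarrow> real" where
  "lam1 d c \<beta> i = (- c + sqrt (c\<^sup>2 + 4 * \<beta> * d $ i)) / (2 * d $ i)"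

definition lam2 :: "real^'n \<Rightarrow> real \<Rightarrow> real \<Rightarrow> 'n \<Rightarrow> real" where
  "lam2 d c \<beta> i = (c + sqrt (c\<^sup>2 + 4 * \<beta> * d $ i)) / (2 * d $ i)"

definition Hfun :: "real \<Rightarrow> (real^'n \<Rightarrow> real^'n) \<Rightarrow> real^'n \<Rightarrow> 'n \<Rightarrow> real" where
  "Hfun \<beta> f u i = \<beta> * u $ i + f u $ i"

definition Top :: "real^'n \<Rightarrow> real \<Rightarrow> real \<Rightarrow> (real^'n \<Rightarrow> real^'n) \<Rightarrow> (real \<Rightarrow> real^'n) \<Rightarrow> real \<Rightarrow> real^'n" where
  "Top d c \<beta> f u \<xi> = (\<chi> i.
     1 / (d $ i * (lam1 d c \<beta> i + lam2 d c \<beta> i)) *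
       (integral {..\<xi>} (\<lambda>s. exp (- lam1 d c \<beta> i * (\<xi> - s)) * Hfun \<beta> f (u s) i) +
        integral {\<xi>..} (\<lambda>s. exp (lam2 d c \<beta> i * (\<xi> - s)) * Hfun \<beta> f (u s) i)))"

definition phi_plus :: "real^'n \<Rightarrow> (real \<Rightarrow> real^'n) \<Rightarrow> real \<Rightarrow> real \<Rightarrow> real^'n" where
  "phi_plus k \<nu> \<Lambda> \<xi> = (\<chi> i. min (k $ i) (\<nu> \<Lambda> $ i * exp (\<Lambda> * \<xi>)))"

definition phi_minus :: "(real \<Rightarrow> real^'n) \<Rightarrow> real \<Rightarrow> real \<Rightarrow> real \<Rightarrow> real \<Rightarrow> real^'n" where
  "phi_minus \<nu> \<Lambda> \<gamma> q \<xi> = (\<chi> i. max 0 (\<nu> \<Lambda> $ i * exp (\<Lambda> * \<xi>) - q * \<nu> (\<gamma> * \<Lambda>) $ i * exp (\<gamma> * \<Lambda> * \<xi>)))"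

definition E_rho :: "real \<Rightarrow> (real \<Rightarrow> real^'n) set" where
  "E_rho \<rho> = {u. continuous_on UNIV u \<and> (\<forall>i. \<exists>B. \<forall>\<xi>. \<bar>u \<xi> $ i\<bar> * exp (- \<rho> * \<xi>) \<le> B)}"

definition Aset :: "real \<Rightarrow> (real \<Rightarrow> real^'n) \<Rightarrow> (real \<Rightarrow> real^'n) \<Rightarrow> (real \<Rightarrow> real^'n) set" where
  "Aset \<rho> phm php = {u \<in> E_rho \<rho>. \<forall>\<xi>. phm \<xi> \<le> u \<xi> \<and> u \<xi> \<le> php \<xi>}"

end

theory Submission
  imports Defs
begin

text \<open>Since \<open>f\<close> is cooperative on \<open>[0,k]\<close> and its diagonal partial derivatives are bounded
  by a constant \<open>M < \<beta>\<close>, every directional derivative of \<open>H = \<beta> id + f\<close> along a nonnegative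
  vector is componentwise nonnegative, so \<open>H\<close> is monotone on \<open>[0,k]\<close>; as \<open>f\<close> is only piecewise
  \<open>C\<^sup>2\<close>, this is first proved on the open box via a Dini-derivative argument along segments and
  then extended to the closed box by continuity. The kernels of \<open>\<T>\<close> are positive, so \<open>\<T>\<close>
  inherits the monotonicity of \<open>H\<close>. Invariance of \<open>\<A>\<close> follows by sandwiching with the
  sub- and supersolutions \<open>\<phi>\<^sup>\<plusminus>\<close>, and a translate of a nondecreasing profile dominates it, which
  gives the last claim. Hypotheses (H2), (H3) and the choice of \<open>\<Lambda>\<^sub>c\<close>, \<open>\<gamma>\<close>, \<open>q\<close> enter only
  through the assumed sub- and supersolution properties of \<open>\<phi>\<^sup>\<plusminus>\<close>.\<close>

lemma right_dini_nonneg_imp_le: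
  fixes h :: "real \<Rightarrow> real"
  assumes "a \<le> b" and h_cont: "continuous_on {a..b} h"
    and dini: "\<And>t e. a \<le> t \<Longrightarrow> t < b \<Longrightarrow> e > 0 \<Longrightarrow>
                 eventually (\<lambda>s. - e * (s - t) \<le> h s - h t) (at_right t)"
  shows "h a \<le> h b"
proof -
  have slack: "h a - e * (b - a) \<le> h b" if e: "e > 0" for e
  proof -
    define S where "S = {t \<in> {a..b}. h a - e * (t - a) \<le> h t}"
    have "closed S" unfolding S_def
      by (intro continuous_on_closed_Collect_le h_cont continuous_intros)
    moreover have "a \<in> S" using \<open>a \<le> b\<close> by (auto simp: S_def)
    moreover have bdd: "bdd_above S" unfolding S_def bdd_above_def by (intro exI[of _ b]) auto
    ultimately have sup_S: "Sup S \<in> S" using closed_contains_Sup by blast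
    have "Sup S = b"
    proof (rule ccontr)
      assume "Sup S \<noteq> b"
      with sup_S have lt: "Sup S < b" and ge: "a \<le> Sup S" by (auto simp: S_def)
      from dini[OF ge lt e] obtain c where "c > Sup S"
        and near: "\<And>y. Sup S < y \<Longrightarrow> y < c \<Longrightarrow> - e * (y - Sup S) \<le> h y - h (Sup S)"
        unfolding eventually_at_right_field by blast
      define y where "y = (Sup S + min c b) / 2"
      have y: "Sup S < y" "y < c" "y \<le> b" using \<open>c > Sup S\<close> lt by (auto simp: y_def)
      have "h a - e * (Sup S - a) \<le> h (Sup S)" using sup_S by (auto simp: S_def)
      with near[OF y(1,2)] have "y \<in> S" using y ge by (auto simp: S_def algebra_simps)
      then have "y \<le> Sup S" by (rule cSup_upper[OF _ bdd])
      with y show False by simp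
    qed
    then show ?thesis using sup_S by (auto simp: S_def)
  qed
  show ?thesis
  proof (rule ccontr)
    assume "\<not> h a \<le> h b"
    then have "a \<noteq> b" by auto
    with \<open>a \<le> b\<close> have "a < b" by simp
    define e where "e = (h a - h b) / (2 * (b - a))"
    have "e > 0" "e * (b - a) = (h a - h b) / 2"
      using \<open>\<not> h a \<le> h b\<close> \<open>a < b\<close> by (auto simp: e_def field_simps)
    then have "h a - (h a - h b) / 2 \<le> h b" using slack by metis
    then show False using \<open>\<not> h a \<le> h b\<close> by (simp add: field_simps)
  qed
qed

lemma linear_cooperative_derivative_lower_bound:
  fixes L :: "real^'n \<Rightarrow> real^'n"
  assumes "linear L" and off_diag: "\<And>j. j \<noteq> i \<Longrightarrow> 0 \<le> L (axis j 1) $ i"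
    and diag: "\<bar>L (axis i 1) $ i\<bar> \<le> M" and "M < \<beta>" and "0 \<le> w"
  shows "- \<beta> * w $ i \<le> L w $ i"
proof -
  have w: "0 \<le> w $ j" for j using \<open>0 \<le> w\<close> by (simp add: less_eq_vec_def)
  have "L w $ i = w $ i * L (axis i 1) $ i + (\<Sum>j\<in>UNIV - {i}. w $ j * L (axis j 1) $ i)"
    by (subst Cartesian_Space.linear_componentwise)
       (use \<open>linear L\<close> in \<open>simp_all add: linear_def scalar_mult_eq_scaleR[abs_def] sum.remove[of UNIV i]\<close>)
  moreover have "0 \<le> (\<Sum>j\<in>UNIV - {i}. w $ j * L (axis j 1) $ i)"
    using w off_diag by (intro sum_nonneg) auto
  moreover have "- M * w $ i \<le> w $ i * L (axis i 1) $ i"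
    using diag w[of i] by (metis abs_le_D2 minus_le_iff minus_mult_commute mult.commute mult_left_mono)
  moreover have "M * w $ i \<le> \<beta> * w $ i" using \<open>M < \<beta>\<close> w[of i] by (simp add: mult_right_mono)
  ultimately show ?thesis by linarith
qed

lemma pw_C2_on_C1_pieces:
  assumes "pw_C2_on S f"
  obtains F where "finite F" "S = \<Union>(fst ` F)"
    "\<And>P g. (P, g) \<in> F \<Longrightarrow> closed P \<and> closure (interior P) = P \<and> (\<forall>x\<in>P. f x = g x) \<and>
       (\<exists>U D. open U \<and> P \<subseteq> U \<and> continuous_on U D \<and>
          (\<forall>y\<in>U. (g has_derivative blinfun_apply (D y)) (at y)))"
proof -
  obtain F where F: "finite F" "S = \<Union>(fst ` F)"
    and pieces: "\<forall>(P, g)\<in>F. closed P \<and> closure (interior P) = P \<and>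
                   (\<exists>U. open U \<and> P \<subseteq> U \<and> C2_on U g \<and> (\<forall>x\<in>P. f x = g x))"
    using assms unfolding pw_C2_on_def by blast
  show thesis
  proof (rule that[OF F])
    fix P g assume "(P, g) \<in> F"
    then have P: "closed P" "closure (interior P) = P"
      and "\<exists>U. open U \<and> P \<subseteq> U \<and> C2_on U g \<and> (\<forall>x\<in>P. f x = g x)"
      using pieces by auto
    then obtain U where U: "open U" "P \<subseteq> U" "C2_on U g" "\<forall>x\<in>P. f x = g x" by blast
    then obtain D D2 where D: "\<forall>y\<in>U. (g has_derivative blinfun_apply (D y)) (at y)"
      and D2: "\<forall>y\<in>U. (D has_derivative blinfun_apply (D2 y)) (at y)"
      unfolding C2_on_def by blast
    have "continuous_on U D"
      using D2 by (intro continuous_at_imp_continuous_on ballI has_derivative_continuous) blast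
    with P U D show "closed P \<and> closure (interior P) = P \<and> (\<forall>x\<in>P. f x = g x) \<and>
       (\<exists>U D. open U \<and> P \<subseteq> U \<and> continuous_on U D \<and>
          (\<forall>y\<in>U. (g has_derivative blinfun_apply (D y)) (at y)))" by blast
  qed
qed

text \<open>A lower bound on the derivatives of \<open>f\<close> at the interior points of a piece passes, by
  continuity of the derivative of the smooth extension \<open>g\<close>, to the boundary points of the piece.\<close>

lemma piece_derivative_lower_bound:
  fixes f g :: "real^'n \<Rightarrow> real^'n" and D :: "real^'n \<Rightarrow> ((real^'n) \<Rightarrow>\<^sub>L (real^'n))"
  assumes "open U" "P \<subseteq> U" "closure (interior P) = P"
    and "continuous_on U D" and g_deriv: "\<forall>y\<in>U. (g has_derivative blinfun_apply (D y)) (at y)"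
    and f_eq: "\<forall>x\<in>P. f x = g x" and "open V"
    and bound: "\<forall>y\<in>V. \<forall>L. (f has_derivative L) (at y within Q) \<longrightarrow> b \<le> L w $ i"
    and "x \<in> P" "x \<in> V"
  shows "b \<le> blinfun_apply (D x) w $ i"
proof -
  have x: "x \<in> closure (interior P \<inter> V)"
    using open_Int_closure_subset[OF \<open>open V\<close>, of "interior P"] assms(3,9,10) by (auto simp: Int_commute)
  have "closure (interior P \<inter> V) \<subseteq> U"
    using closure_mono[of "interior P \<inter> V" "interior P"] assms(2,3) by auto
  then have "continuous_on (closure (interior P \<inter> V)) (\<lambda>y. blinfun_apply (D y) w $ i)"
    by (intro continuous_intros continuous_on_subset[OF \<open>continuous_on U D\<close>])
  then show ?thesis
  proof (rule continuous_ge_on_closure[OF _ x])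
    fix y assume y: "y \<in> interior P \<inter> V"
    then have "(g has_derivative blinfun_apply (D y)) (at y)"
      using g_deriv interior_subset assms(2) by blast
    then have "(f has_derivative blinfun_apply (D y)) (at y)"
      by (rule has_derivative_transform_within_open[where s="interior P"])
         (use y f_eq in \<open>auto dest: subsetD[OF interior_subset]\<close>)
    then show "b \<le> blinfun_apply (D y) w $ i"
      using bound y has_derivative_at_withinI by blast
  qed
qed

lemma has_real_derivative_along_line_component:
  fixes g :: "real^'n \<Rightarrow> real^'n"
  assumes "(g has_derivative blinfun_apply L) (at (a + t *\<^sub>R w))"
  shows "((\<lambda>s. g (a + s *\<^sub>R w) $ i) has_real_derivative blinfun_apply L w $ i) (at t)"
proof -
  have "((\<lambda>s. a + s *\<^sub>R w) has_derivative (\<lambda>s. s *\<^sub>R w)) (at t)"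
    by (auto intro!: derivative_eq_intros)
  then have "((\<lambda>s. g (a + s *\<^sub>R w)) has_derivative (\<lambda>s. blinfun_apply L (s *\<^sub>R w))) (at t)"
    using has_derivative_compose assms by blast
  then have "((\<lambda>s. g (a + s *\<^sub>R w) $ i) has_derivative (\<lambda>s. blinfun_apply L (s *\<^sub>R w) $ i)) (at t)"
    by (rule bounded_linear.has_derivative[OF bounded_linear_vec_nth])
  moreover have "(\<lambda>s. blinfun_apply L (s *\<^sub>R w) $ i) = (*) (blinfun_apply L w $ i)"
    by (auto simp: blinfun.scaleR_right)
  ultimately show ?thesis by (simp add: has_field_derivative_def)
qed

lemma piece_right_dini_lower_bound:
  fixes f g :: "real^'n \<Rightarrow> real^'n" and D :: "real^'n \<Rightarrow> ((real^'n) \<Rightarrow>\<^sub>L (real^'n))"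
  assumes "closed P" "closure (interior P) = P" and f_eq: "\<forall>x\<in>P. f x = g x"
    and "open U" "P \<subseteq> U" "continuous_on U D" and g_deriv: "\<forall>y\<in>U. (g has_derivative blinfun_apply (D y)) (at y)"
    and "open V" and bound: "\<forall>y\<in>V. \<forall>L. (f has_derivative L) (at y within Q) \<longrightarrow> b \<le> L w $ i"
    and "a + t *\<^sub>R w \<in> V" "e > 0"
  shows "eventually (\<lambda>s. a + s *\<^sub>R w \<in> P \<longrightarrow>
           - e * (s - t) \<le> (f (a + s *\<^sub>R w) $ i - s * b) - (f (a + t *\<^sub>R w) $ i - t * b)) (at_right t)"
proof (cases "a + t *\<^sub>R w \<in> P")
  case False
  have "((\<lambda>s. a + s *\<^sub>R w) \<longlongrightarrow> a + t *\<^sub>R w) (at_right t)" by (intro tendsto_intros)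
  moreover have "open (- P)" using \<open>closed P\<close> by auto
  ultimately have "eventually (\<lambda>s. a + s *\<^sub>R w \<in> - P) (at_right t)"
    using False topological_tendstoD by blast
  then show ?thesis by (auto elim: eventually_mono)
next
  case True
  define hP where "hP s = g (a + s *\<^sub>R w) $ i - s * b" for s
  have "(g has_derivative blinfun_apply (D (a + t *\<^sub>R w))) (at (a + t *\<^sub>R w))"
    using g_deriv True \<open>P \<subseteq> U\<close> by blast
  then have "((\<lambda>s. g (a + s *\<^sub>R w) $ i) has_real_derivative blinfun_apply (D (a + t *\<^sub>R w)) w $ i) (at t)"
    by (rule has_real_derivative_along_line_component)
  then have "(hP has_real_derivative blinfun_apply (D (a + t *\<^sub>R w)) w $ i - b) (at t)"
    unfolding hP_def by (auto intro!: derivative_eq_intros)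
  then have lim: "((\<lambda>s. (hP s - hP t) / (s - t)) \<longlongrightarrow> blinfun_apply (D (a + t *\<^sub>R w)) w $ i - b) (at_right t)"
    using has_field_derivative_at_within[of hP _ t "{t<..}"] unfolding has_field_derivative_iff
    by blast
  have "b \<le> blinfun_apply (D (a + t *\<^sub>R w)) w $ i"
    by (rule piece_derivative_lower_bound[OF \<open>open U\<close> \<open>P \<subseteq> U\<close> \<open>closure (interior P) = P\<close>
          \<open>continuous_on U D\<close> g_deriv f_eq \<open>open V\<close> bound True \<open>a + t *\<^sub>R w \<in> V\<close>])
  then have "eventually (\<lambda>s. - e < (hP s - hP t) / (s - t)) (at_right t)"
    using \<open>e > 0\<close> by (intro order_tendstoD(1)[OF lim]) linarith
  then show ?thesis using eventually_at_right_less[of t]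
  proof eventually_elim
    case (elim s)
    then have "- e * (s - t) < hP s - hP t" by (simp add: less_divide_eq)
    then show ?case using True f_eq by (simp add: hP_def)
  qed
qed

text \<open>Near each point of the segment only finitely many closed pieces matter, so the piecewise
  bounds combine into a nonnegative right lower Dini derivative of \<open>s \<mapsto> f (a + s w) $ i - s b\<close>.\<close>

lemma pw_C2_segment_increment_lower_bound:
  fixes f :: "real^'n \<Rightarrow> real^'n"
  assumes "pw_C2_on Q f" "continuous_on Q f" "open V" "V \<subseteq> Q"
    and bound: "\<forall>y\<in>V. \<forall>L. (f has_derivative L) (at y within Q) \<longrightarrow> b \<le> L w $ i"
    and seg: "\<And>t. t \<in> {0..1} \<Longrightarrow> a + t *\<^sub>R w \<in> V"
  shows "f a $ i + b \<le> f (a + w) $ i"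
proof -
  obtain F where "finite F" and cover: "Q = \<Union>(fst ` F)"
    and pieces: "\<And>P g. (P, g) \<in> F \<Longrightarrow> closed P \<and> closure (interior P) = P \<and> (\<forall>x\<in>P. f x = g x) \<and>
       (\<exists>U D. open U \<and> P \<subseteq> U \<and> continuous_on U D \<and>
          (\<forall>y\<in>U. (g has_derivative blinfun_apply (D y)) (at y)))"
    by (rule pw_C2_on_C1_pieces[OF assms(1)]) blast
  define h where "h s = f (a + s *\<^sub>R w) $ i - s * b" for s
  have "continuous_on {0..1} h" unfolding h_def
    by (intro continuous_intros continuous_on_compose2[OF \<open>continuous_on Q f\<close>])
       (use seg \<open>V \<subseteq> Q\<close> in auto)
  then have "h 0 \<le> h 1"
  proof (rule right_dini_nonneg_imp_le[rotated])
    fix t e :: real assume t: "0 \<le> t" "t < 1" and "e > 0"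
    then have "a + t *\<^sub>R w \<in> V" using seg by simp
    have "eventually (\<lambda>s. \<forall>Pg\<in>F. a + s *\<^sub>R w \<in> fst Pg \<longrightarrow> - e * (s - t) \<le> h s - h t) (at_right t)"
    proof (intro eventually_ball_finite[OF \<open>finite F\<close>] ballI)
      fix Pg assume "Pg \<in> F"
      then obtain U D where "closed (fst Pg)" "closure (interior (fst Pg)) = fst Pg"
        "\<forall>x\<in>fst Pg. f x = snd Pg x" "open U" "fst Pg \<subseteq> U" "continuous_on U D"
        "\<forall>y\<in>U. (snd Pg has_derivative blinfun_apply (D y)) (at y)"
        using pieces[of "fst Pg" "snd Pg"] by auto
      from piece_right_dini_lower_bound[OF this \<open>open V\<close> bound \<open>a + t *\<^sub>R w \<in> V\<close> \<open>e > 0\<close>]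
      show "eventually (\<lambda>s. a + s *\<^sub>R w \<in> fst Pg \<longrightarrow> - e * (s - t) \<le> h s - h t) (at_right t)"
        by (simp add: h_def)
    qed
    moreover have "eventually (\<lambda>s. s < 1) (at_right t)"
      by (rule order_tendstoD(2)[OF tendsto_ident_at \<open>t < 1\<close>])
    ultimately show "eventually (\<lambda>s. - e * (s - t) \<le> h s - h t) (at_right t)"
      using eventually_at_right_less[of t]
    proof eventually_elim
      case (elim s)
      then have "a + s *\<^sub>R w \<in> Q" using seg[of s] t \<open>V \<subseteq> Q\<close> by auto
      then obtain Pg where "Pg \<in> F" "a + s *\<^sub>R w \<in> fst Pg" using cover by blast
      then show ?case using elim by blast
    qed
  qed simp
  then show ?thesis by (simp add: h_def)
qed

lemma exp_kernel_absolutely_integrable: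
  fixes E :: "real \<Rightarrow> real"
  assumes "a > 0" and E: "continuous_on UNIV E" and bound: "\<And>x. \<bar>E x\<bar> \<le> B"
  shows "(\<lambda>\<tau>. exp (- a * \<tau>) * E \<tau>) absolutely_integrable_on {0..}"
proof -
  have majorant: "(\<lambda>\<tau>. B * exp (- a * \<tau>)) integrable_on {0..}"
    using integrable_on_cmult_left[OF integrable_on_exp_minus_to_infinity[OF \<open>a > 0\<close>, of 0], of B] by simp
  have le: "norm (exp (- a * \<tau>) * E \<tau>) \<le> B * exp (- a * \<tau>)" for \<tau>
    using bound[of \<tau>] by (simp add: abs_mult mult.commute mult_right_mono)
  have "(\<lambda>\<tau>. exp (- a * \<tau>) * E \<tau>) \<in> borel_measurable (lebesgue_on {0..})"
    by (intro continuous_imp_measurable_on_sets_lebesgue continuous_intros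
        continuous_on_subset[OF E]) auto
  then have "(\<lambda>\<tau>. exp (- a * \<tau>) * E \<tau>) integrable_on {0..}"
    by (rule measurable_bounded_by_integrable_imp_integrable[OF _ majorant]) (use le in auto)
  with le majorant show ?thesis
    by (intro absolutely_integrable_integrable_bound) auto
qed

lemma exp_kernel_integral_left:
  fixes G :: "real \<Rightarrow> real"
  assumes "a > 0" and G: "continuous_on UNIV G" and "\<And>x. \<bar>G x\<bar> \<le> B"
  shows "integral {..\<xi>} (\<lambda>s. exp (- a * (\<xi> - s)) * G s) = integral {0..} (\<lambda>\<tau>. exp (- a * \<tau>) * G (\<xi> - \<tau>))"
proof -
  have "continuous_on UNIV (\<lambda>\<tau>. G (\<xi> - \<tau>))"
    by (intro continuous_on_compose2[OF G] continuous_intros) auto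
  then have "(\<lambda>\<tau>. exp (- a * \<tau>) * G (\<xi> - \<tau>)) absolutely_integrable_on {0..}"
    using exp_kernel_absolutely_integrable assms by blast
  moreover have "((\<lambda>\<tau>. \<xi> - \<tau>) has_field_derivative (-1)) (at x within {0..})" for x
    by (auto intro!: derivative_eq_intros)
  moreover have "(\<lambda>\<tau>. \<xi> - \<tau>) ` {0..} = {..\<xi>}"
    by (auto simp: image_iff intro!: bexI[where x="\<xi> - _"])
  ultimately show ?thesis
    using has_absolute_integral_change_of_variables_1'[where g="\<lambda>\<tau>. \<xi> - \<tau>" and g'="\<lambda>_. -1"
        and f="\<lambda>s. exp (- a * (\<xi> - s)) * G s" and S="{0..}"
        and b="integral {0..} (\<lambda>\<tau>. exp (- a * \<tau>) * G (\<xi> - \<tau>))"]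
    by (simp add: inj_on_def)
qed

lemma exp_kernel_integral_right:
  fixes G :: "real \<Rightarrow> real"
  assumes "a > 0" and G: "continuous_on UNIV G" and "\<And>x. \<bar>G x\<bar> \<le> B"
  shows "integral {\<xi>..} (\<lambda>s. exp (a * (\<xi> - s)) * G s) = integral {0..} (\<lambda>\<tau>. exp (- a * \<tau>) * G (\<xi> + \<tau>))"
proof -
  have "continuous_on UNIV (\<lambda>\<tau>. G (\<xi> + \<tau>))"
    by (intro continuous_on_compose2[OF G] continuous_intros) auto
  then have "(\<lambda>\<tau>. exp (- a * \<tau>) * G (\<xi> + \<tau>)) absolutely_integrable_on {0..}"
    using exp_kernel_absolutely_integrable assms by blast
  moreover have "((\<lambda>\<tau>. \<xi> + \<tau>) has_field_derivative 1) (at x within {0..})" for x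
    by (auto intro!: derivative_eq_intros)
  moreover have "(\<lambda>\<tau>. \<xi> + \<tau>) ` {0..} = {\<xi>..}"
    by (auto simp: image_iff intro!: bexI[where x="_ - \<xi>"])
  ultimately show ?thesis
    using has_absolute_integral_change_of_variables_1'[where g="\<lambda>\<tau>. \<xi> + \<tau>" and g'="\<lambda>_. 1"
        and f="\<lambda>s. exp (a * (\<xi> - s)) * G s" and S="{0..}"
        and b="integral {0..} (\<lambda>\<tau>. exp (- a * \<tau>) * G (\<xi> + \<tau>))"]
    by (simp add: inj_on_def)
qed

lemma continuous_on_exp_kernel_integral:
  fixes G :: "real \<Rightarrow> real"
  assumes "a > 0" and G: "continuous_on UNIV G" and bound: "\<And>x. \<bar>G x\<bar> \<le> B"
  shows "continuous_on UNIV (\<lambda>\<xi>. integral {0..} (\<lambda>\<tau>. exp (- a * \<tau>) * G (\<xi> + \<sigma> * \<tau>)))"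
  unfolding continuous_on_eq_continuous_at[OF open_UNIV]
proof (intro ballI continuous_at_sequentiallyI)
  fix \<xi> and x :: "nat \<Rightarrow> real" assume x: "x \<longlonglongrightarrow> \<xi>"
  have G_shift: "continuous_on UNIV (\<lambda>\<tau>. G (y + \<sigma> * \<tau>))" for y
    by (intro continuous_on_compose2[OF G] continuous_intros) auto
  show "(\<lambda>n. integral {0..} (\<lambda>\<tau>. exp (- a * \<tau>) * G (x n + \<sigma> * \<tau>))) \<longlonglongrightarrow>
        integral {0..} (\<lambda>\<tau>. exp (- a * \<tau>) * G (\<xi> + \<sigma> * \<tau>))"
  proof (rule dominated_convergence(2))
    show "(\<lambda>\<tau>. exp (- a * \<tau>) * G (x n + \<sigma> * \<tau>)) integrable_on {0..}" for n
      using exp_kernel_absolutely_integrable[OF \<open>a > 0\<close> G_shift bound] absolutely_integrable_on_def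
      by blast
    show "(\<lambda>\<tau>. B * exp (- a * \<tau>)) integrable_on {0..}"
      using integrable_on_cmult_left[OF integrable_on_exp_minus_to_infinity[OF \<open>a > 0\<close>, of 0], of B] by simp
    show "norm (exp (- a * \<tau>) * G (x n + \<sigma> * \<tau>)) \<le> B * exp (- a * \<tau>)" for n \<tau>
      using bound[of "x n + \<sigma> * \<tau>"] by (simp add: abs_mult mult.commute mult_right_mono)
    show "(\<lambda>n. exp (- a * \<tau>) * G (x n + \<sigma> * \<tau>)) \<longlonglongrightarrow> exp (- a * \<tau>) * G (\<xi> + \<sigma> * \<tau>)" for \<tau>
      using G x by (intro tendsto_intros isCont_tendsto_compose[of _ G])
                   (auto simp: continuous_on_eq_continuous_at)
  qed
qed

locale cooperative_reaction =
  fixes f :: "real^'n \<Rightarrow> real^'n" and k kp :: "real^'n" and \<beta> :: real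
  assumes k_pos: "\<forall>j. 0 < k $ j" and k_le_kp: "k \<le> kp"
    and f_cont: "continuous_on {0..kp} f" and f_pw: "pw_C2_on {0..kp} f"
    and f_coop: "cooperative_on {0..kp} {0..k} f"
    and beta_bound: "\<exists>M<\<beta>. \<forall>u\<in>{0..kp}. \<forall>L. (f has_derivative L) (at u within {0..kp}) \<longrightarrow>
                         (\<forall>i j. \<bar>L (axis i 1) $ j\<bar> \<le> M)"
begin

lemma order_interval_subset: "{0..k} \<subseteq> {0..kp}"
  using k_le_kp by (auto intro: order_trans)

lemma Hfun_mono_on_box:
  assumes "u \<in> box 0 k" "v \<in> box 0 k" "u \<le> v"
  shows "Hfun \<beta> f u i \<le> Hfun \<beta> f v i"
proof -
  obtain M where "M < \<beta>" and M: "\<And>y L j. y \<in> {0..kp} \<Longrightarrow> (f has_derivative L) (at y within {0..kp}) \<Longrightarrow>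
                                    \<bar>L (axis j 1) $ j\<bar> \<le> M"
    using beta_bound by blast
  have box_sub: "box 0 k \<subseteq> {0..k}"
    using box_subset_cbox by (metis interval_cbox_cart)
  have "f u $ i + - \<beta> * (v - u) $ i \<le> f (u + (v - u)) $ i"
  proof (rule pw_C2_segment_increment_lower_bound[OF f_pw f_cont open_box])
    show "box 0 k \<subseteq> {0..kp}" using box_sub order_interval_subset by blast
  next
    show "\<forall>y\<in>box 0 k. \<forall>L. (f has_derivative L) (at y within {0..kp}) \<longrightarrow>
            - \<beta> * (v - u) $ i \<le> L (v - u) $ i"
    proof (intro ballI allI impI)
      fix y L assume y: "y \<in> box 0 k" and L: "(f has_derivative L) (at y within {0..kp})"
      show "- \<beta> * (v - u) $ i \<le> L (v - u) $ i"
      proof (rule linear_cooperative_derivative_lower_bound[OF has_derivative_linear[OF L] _ _ \<open>M < \<beta>\<close>])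
        show "0 \<le> L (axis j 1) $ i" if "j \<noteq> i" for j
          using f_coop y box_sub L that unfolding cooperative_on_def by blast
        show "\<bar>L (axis i 1) $ i\<bar> \<le> M" using M[OF _ L] y box_sub order_interval_subset by blast
        show "0 \<le> v - u" using \<open>u \<le> v\<close> by simp
      qed
    qed
  next
    fix t :: real assume "t \<in> {0..1}"
    then have "u + t *\<^sub>R (v - u) = (1 - t) *\<^sub>R u + t *\<^sub>R v" "0 \<le> t" "t \<le> 1"
      by (auto simp: algebra_simps)
    then show "u + t *\<^sub>R (v - u) \<in> box 0 k"
      using convexD[OF convex_box(2) assms(1,2), of "1 - t" t] by simp
  qed
  then show ?thesis by (simp add: Hfun_def algebra_simps)
qed

text \<open>The contraction towards the centre of the box moves \<open>[0,k]\<close> into the open box, where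
  monotonicity is already known, and converges to the identity.\<close>

lemma Hfun_mono:
  assumes "u \<in> {0..k}" "v \<in> {0..k}" "u \<le> v"
  shows "Hfun \<beta> f u i \<le> Hfun \<beta> f v i"
proof -
  define shrink where "shrink \<epsilon> x = (1 - \<epsilon>) *\<^sub>R x + \<epsilon> *\<^sub>R ((1 / 2) *\<^sub>R k)" for \<epsilon> :: real and x
  have shrink_box: "shrink \<epsilon> x \<in> box 0 k" if x: "x \<in> {0..k}" and \<epsilon>: "0 < \<epsilon>" "\<epsilon> < 1" for \<epsilon> x
  proof -
    have "0 < shrink \<epsilon> x $ j \<and> shrink \<epsilon> x $ j < k $ j" for j
    proof -
      have "0 \<le> x $ j" "x $ j \<le> k $ j" "0 < k $ j" using x k_pos by (auto simp: less_eq_vec_def)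
      then have "0 \<le> (1 - \<epsilon>) * x $ j" "(1 - \<epsilon>) * x $ j \<le> k $ j - \<epsilon> * k $ j" "0 < \<epsilon> * k $ j"
        using \<epsilon> mult_left_mono[of "x $ j" "k $ j" "1 - \<epsilon>"] mult_left_le_one_le[of "x $ j" \<epsilon>]
        by (auto simp: algebra_simps)
      moreover have "shrink \<epsilon> x $ j = (1 - \<epsilon>) * x $ j + \<epsilon> * k $ j / 2" by (simp add: shrink_def)
      ultimately show ?thesis by linarith
    qed
    then show ?thesis by (simp add: mem_box_cart)
  qed
  have shrink_lim: "((\<lambda>\<epsilon>. Hfun \<beta> f (shrink \<epsilon> x) i) \<longlongrightarrow> Hfun \<beta> f x i) (at_right 0)"
    if x: "x \<in> {0..k}" for x
  proof -
    have "((\<lambda>\<epsilon>. shrink \<epsilon> x) \<longlongrightarrow> (1 - 0) *\<^sub>R x + 0 *\<^sub>R ((1 / 2) *\<^sub>R k)) (at_right 0)"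
      unfolding shrink_def by (intro tendsto_intros)
    then have lim: "((\<lambda>\<epsilon>. shrink \<epsilon> x) \<longlongrightarrow> x) (at_right 0)" by simp
    have "eventually (\<lambda>\<epsilon>. shrink \<epsilon> x \<in> {0..kp}) (at_right 0)"
      using shrink_box[OF x] box_subset_cbox[of 0 k] order_interval_subset
      by (intro eventually_at_rightI[of 0 1]) (auto simp: interval_cbox_cart)
    then have "((\<lambda>\<epsilon>. f (shrink \<epsilon> x)) \<longlongrightarrow> f x) (at_right 0)"
      using continuous_on_tendsto_compose[OF f_cont lim] x order_interval_subset by blast
    then show ?thesis unfolding Hfun_def by (intro tendsto_intros lim)
  qed
  have "eventually (\<lambda>\<epsilon>. Hfun \<beta> f (shrink \<epsilon> u) i \<le> Hfun \<beta> f (shrink \<epsilon> v) i) (at_right 0)"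
  proof (rule eventually_at_rightI[of 0 1])
    fix \<epsilon> :: real assume "\<epsilon> \<in> {0<..<1}"
    moreover have "shrink \<epsilon> u \<le> shrink \<epsilon> v"
      using \<open>u \<le> v\<close> \<open>\<epsilon> \<in> {0<..<1}\<close> by (auto simp: shrink_def less_eq_vec_def intro: mult_left_mono)
    ultimately show "Hfun \<beta> f (shrink \<epsilon> u) i \<le> Hfun \<beta> f (shrink \<epsilon> v) i"
      using Hfun_mono_on_box shrink_box assms(1,2) by simp
  qed simp
  then show ?thesis using tendsto_le[OF _ shrink_lim[OF assms(2)] shrink_lim[OF assms(1)]] by simp
qed

end

definition profiles :: "real^'n \<Rightarrow> (real \<Rightarrow> real^'n) set" where
  "profiles r = {u. continuous_on UNIV u \<and> (\<forall>s. u s \<in> {0..r})}"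

lemma profiles_compose:
  assumes "u \<in> profiles r" "continuous_on UNIV g"
  shows "(\<lambda>s. u (g s)) \<in> profiles r"
  using assms continuous_on_compose2[of UNIV u UNIV g] by (auto simp: profiles_def)

lemma profiles_below:
  assumes "continuous_on UNIV u" "\<And>s. 0 \<le> u s" "\<And>s. u s \<le> w s" "w \<in> profiles r"
  shows "u \<in> profiles r"
  using assms by (auto simp: profiles_def intro: order_trans)

lemma Aset_subset_profiles:
  assumes "phm \<in> profiles r" "php \<in> profiles r"
  shows "Aset \<rho> phm php \<subseteq> profiles r"
proof
  fix u assume "u \<in> Aset \<rho> phm php"
  then have "continuous_on UNIV u" "\<And>s. phm s \<le> u s" "\<And>s. u s \<le> php s"
    by (auto simp: Aset_def E_rho_def)
  moreover have "0 \<le> phm s" for s using assms(1) by (auto simp: profiles_def)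
  ultimately show "u \<in> profiles r" using profiles_below assms(2) order_trans by metis
qed

locale wave_operator = cooperative_reaction f k kp \<beta>
  for f :: "real^'n \<Rightarrow> real^'n" and k kp :: "real^'n" and \<beta> :: real +
  fixes d :: "real^'n" and c :: real
  assumes d_pos: "\<forall>i. 0 < d $ i" and f_0: "f 0 = 0" and f_k: "f k = 0"
    and lam1_pos: "\<forall>i. 0 < lam1 d c \<beta> i" and lam2_pos: "\<forall>i. 0 < lam2 d c \<beta> i"
begin

lemma Hfun_profile_bounded:
  assumes "u \<in> profiles k"
  shows "\<bar>Hfun \<beta> f (u s) i\<bar> \<le> \<beta> * k $ i"
proof -
  have "0 \<le> k" using k_pos by (simp add: less_eq_vec_def less_imp_le)
  then have "Hfun \<beta> f 0 i \<le> Hfun \<beta> f (u s) i" "Hfun \<beta> f (u s) i \<le> Hfun \<beta> f k i"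
    using assms by (auto simp: profiles_def intro: Hfun_mono)
  then show ?thesis by (simp add: Hfun_def f_0 f_k)
qed

lemma Hfun_profile_continuous:
  assumes "u \<in> profiles k"
  shows "continuous_on UNIV (\<lambda>s. Hfun \<beta> f (u s) i)"
proof -
  have u: "continuous_on UNIV u" "\<And>s. u s \<in> {0..kp}"
    using assms k_le_kp by (auto simp: profiles_def intro: order_trans)
  then have "continuous_on UNIV (\<lambda>s. f (u s))" by (intro continuous_on_compose2[OF f_cont]) auto
  with u show ?thesis unfolding Hfun_def by (intro continuous_intros)
qed

lemma Top_eq_exp_kernel_integrals:
  assumes "u \<in> profiles k"
  shows "Top d c \<beta> f u \<xi> $ i = 1 / (d $ i * (lam1 d c \<beta> i + lam2 d c \<beta> i)) *
           (integral {0..} (\<lambda>\<tau>. exp (- lam1 d c \<beta> i * \<tau>) * Hfun \<beta> f (u (\<xi> - \<tau>)) i) +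
            integral {0..} (\<lambda>\<tau>. exp (- lam2 d c \<beta> i * \<tau>) * Hfun \<beta> f (u (\<xi> + \<tau>)) i))"
  using exp_kernel_integral_left[OF _ Hfun_profile_continuous[OF assms] Hfun_profile_bounded[OF assms]]
    exp_kernel_integral_right[OF _ Hfun_profile_continuous[OF assms] Hfun_profile_bounded[OF assms]]
    lam1_pos lam2_pos
  by (simp add: Top_def)

lemma Top_denominator_pos: "0 < d $ i * (lam1 d c \<beta> i + lam2 d c \<beta> i)"
  using d_pos lam1_pos lam2_pos by (intro mult_pos_pos add_pos_pos) auto

lemma exp_kernel_Hfun_integrable:
  assumes "0 < a" "u \<in> profiles k"
  shows "(\<lambda>\<tau>. exp (- a * \<tau>) * Hfun \<beta> f (u \<tau>) i) integrable_on {0..}"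
  using exp_kernel_absolutely_integrable[OF assms(1) Hfun_profile_continuous[OF assms(2)]
      Hfun_profile_bounded[OF assms(2)]]
  by (simp add: absolutely_integrable_on_def)

lemma Top_le:
  assumes u: "u \<in> profiles k" and v: "v \<in> profiles k"
    and left: "\<And>\<tau>. 0 \<le> \<tau> \<Longrightarrow> u (\<xi> - \<tau>) \<le> v (\<xi>' - \<tau>)"
    and right: "\<And>\<tau>. 0 \<le> \<tau> \<Longrightarrow> u (\<xi> + \<tau>) \<le> v (\<xi>' + \<tau>)"
  shows "Top d c \<beta> f u \<xi> $ i \<le> Top d c \<beta> f v \<xi>' $ i"
proof -
  have shift: "(\<lambda>\<tau>. w (\<eta> + \<sigma> * \<tau>)) \<in> profiles k" if "w \<in> profiles k" for w \<eta> \<sigma>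
    using profiles_compose[OF that] by (simp add: continuous_intros)
  have in_box: "w s \<in> {0..k}" if "w \<in> profiles k" for w s using that by (simp add: profiles_def)
  have "integral {0..} (\<lambda>\<tau>. exp (- a * \<tau>) * Hfun \<beta> f (u (\<xi> + \<sigma> * \<tau>)) i)
          \<le> integral {0..} (\<lambda>\<tau>. exp (- a * \<tau>) * Hfun \<beta> f (v (\<xi>' + \<sigma> * \<tau>)) i)"
    if "0 < a" and le: "\<And>\<tau>. 0 \<le> \<tau> \<Longrightarrow> u (\<xi> + \<sigma> * \<tau>) \<le> v (\<xi>' + \<sigma> * \<tau>)" for a \<sigma>
    using exp_kernel_Hfun_integrable[OF \<open>0 < a\<close> shift[OF u]] exp_kernel_Hfun_integrable[OF \<open>0 < a\<close> shift[OF v]]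
    by (rule integral_le) (use le Hfun_mono in_box u v in \<open>auto intro!: mult_left_mono\<close>)
  from this[of "lam1 d c \<beta> i" "-1"] this[of "lam2 d c \<beta> i" 1] lam1_pos lam2_pos left right
  have "integral {0..} (\<lambda>\<tau>. exp (- lam1 d c \<beta> i * \<tau>) * Hfun \<beta> f (u (\<xi> - \<tau>)) i)
          \<le> integral {0..} (\<lambda>\<tau>. exp (- lam1 d c \<beta> i * \<tau>) * Hfun \<beta> f (v (\<xi>' - \<tau>)) i)"
    "integral {0..} (\<lambda>\<tau>. exp (- lam2 d c \<beta> i * \<tau>) * Hfun \<beta> f (u (\<xi> + \<tau>)) i)
          \<le> integral {0..} (\<lambda>\<tau>. exp (- lam2 d c \<beta> i * \<tau>) * Hfun \<beta> f (v (\<xi>' + \<tau>)) i)"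
    by auto
  then show ?thesis using Top_denominator_pos[of i]
    by (simp add: Top_eq_exp_kernel_integrals[OF u] Top_eq_exp_kernel_integrals[OF v] divide_right_mono)
qed

lemma Top_mono:
  assumes "u \<in> profiles k" "v \<in> profiles k" "\<And>s. u s \<le> v s"
  shows "Top d c \<beta> f u \<xi> \<le> Top d c \<beta> f v \<xi>"
  using Top_le[OF assms(1,2)] assms(3) by (simp add: less_eq_vec_def)

lemma Top_continuous:
  assumes "u \<in> profiles k"
  shows "continuous_on UNIV (Top d c \<beta> f u)"
proof -
  have kernel_cont: "continuous_on UNIV (\<lambda>\<xi>. integral {0..} (\<lambda>\<tau>. exp (- a * \<tau>) * Hfun \<beta> f (u (\<xi> + \<sigma> * \<tau>)) i))"
    if "0 < a" for a \<sigma> i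
    using continuous_on_exp_kernel_integral[OF that Hfun_profile_continuous[OF assms]
        Hfun_profile_bounded[OF assms]] .
  have "continuous_on UNIV (\<lambda>\<xi>. integral {0..} (\<lambda>\<tau>. exp (- lam1 d c \<beta> i * \<tau>) * Hfun \<beta> f (u (\<xi> - \<tau>)) i))"
    "continuous_on UNIV (\<lambda>\<xi>. integral {0..} (\<lambda>\<tau>. exp (- lam2 d c \<beta> i * \<tau>) * Hfun \<beta> f (u (\<xi> + \<tau>)) i))"
    for i using kernel_cont[of "lam1 d c \<beta> i" "-1" i] kernel_cont[of "lam2 d c \<beta> i" 1 i] lam1_pos lam2_pos
    by auto
  then have "continuous_on UNIV (\<lambda>\<xi>. Top d c \<beta> f u \<xi> $ i)" for i
    unfolding Top_eq_exp_kernel_integrals[OF assms] by (intro continuous_intros)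
  then have "continuous_on UNIV (\<lambda>\<xi>. \<chi> i. Top d c \<beta> f u \<xi> $ i)" by (rule continuous_on_vec_lambda)
  then show ?thesis by simp
qed

lemma Top_preserves_Aset:
  assumes phm: "phm \<in> profiles k" "\<And>\<xi>. phm \<xi> \<le> Top d c \<beta> f phm \<xi>"
    and php: "php \<in> profiles k" "php \<in> E_rho \<rho>" "\<And>\<xi>. Top d c \<beta> f php \<xi> \<le> php \<xi>"
    and u: "u \<in> Aset \<rho> phm php"
  shows "Top d c \<beta> f u \<in> Aset \<rho> phm php"
proof -
  have u_prof: "u \<in> profiles k" using Aset_subset_profiles[OF phm(1) php(1)] u by blast
  have below: "phm \<xi> \<le> u \<xi>" and above: "u \<xi> \<le> php \<xi>" for \<xi> using u by (auto simp: Aset_def)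
  have lower: "phm \<xi> \<le> Top d c \<beta> f u \<xi>" for \<xi>
    using phm(2) Top_mono[OF phm(1) u_prof below] by (rule order_trans)
  have upper: "Top d c \<beta> f u \<xi> \<le> php \<xi>" for \<xi>
    using Top_mono[OF u_prof php(1) above] php(3) by (rule order_trans)
  have "\<exists>B. \<forall>\<xi>. \<bar>Top d c \<beta> f u \<xi> $ i\<bar> * exp (- \<rho> * \<xi>) \<le> B" for i
  proof -
    obtain B where B: "\<And>\<xi>. \<bar>php \<xi> $ i\<bar> * exp (- \<rho> * \<xi>) \<le> B" using php(2) by (auto simp: E_rho_def)
    have nonneg: "0 \<le> phm \<xi>" for \<xi> using phm(1) by (simp add: profiles_def)
    have "0 \<le> Top d c \<beta> f u \<xi> $ i" "Top d c \<beta> f u \<xi> $ i \<le> php \<xi> $ i" for \<xi>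
      using order_trans[OF nonneg lower[of \<xi>]] upper[of \<xi>] by (simp_all add: less_eq_vec_def)
    then have "\<bar>Top d c \<beta> f u \<xi> $ i\<bar> \<le> \<bar>php \<xi> $ i\<bar>" for \<xi>
      by (metis abs_of_nonneg order_trans)
    then have "\<bar>Top d c \<beta> f u \<xi> $ i\<bar> * exp (- \<rho> * \<xi>) \<le> \<bar>php \<xi> $ i\<bar> * exp (- \<rho> * \<xi>)" for \<xi>
      by (rule mult_right_mono) simp
    then show ?thesis by (intro exI[of _ B] allI order_trans[OF _ B])
  qed
  then show ?thesis
    using Top_continuous[OF u_prof] lower upper by (simp add: Aset_def E_rho_def)
qed

end

lemma phi_plus_in_profiles:
  assumes "0 \<le> k" "0 \<le> \<nu> \<Lambda>"
  shows "phi_plus k \<nu> \<Lambda> \<in> profiles k"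
  using assms unfolding profiles_def phi_plus_def
  by (auto simp: less_eq_vec_def intro!: continuous_intros)

lemma phi_plus_in_E_rho:
  assumes "0 \<le> k" "0 \<le> \<nu> \<Lambda>" "0 \<le> \<rho>" "\<rho> \<le> \<Lambda>"
  shows "phi_plus k \<nu> \<Lambda> \<in> E_rho \<rho>"
proof -
  have "\<bar>phi_plus k \<nu> \<Lambda> \<xi> $ i\<bar> * exp (- \<rho> * \<xi>) \<le> k $ i + \<nu> \<Lambda> $ i" for \<xi> i
  proof -
    have k_i: "0 \<le> k $ i" and \<nu>_i: "0 \<le> \<nu> \<Lambda> $ i" using assms(1,2) by (simp_all add: less_eq_vec_def)
    then have phi_i: "\<bar>phi_plus k \<nu> \<Lambda> \<xi> $ i\<bar> = min (k $ i) (\<nu> \<Lambda> $ i * exp (\<Lambda> * \<xi>))"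
      by (simp add: phi_plus_def)
    show ?thesis
    proof (cases "0 \<le> \<xi>")
      case True
      then have "exp (- \<rho> * \<xi>) \<le> 1" using assms(3) by simp
      then have "min (k $ i) (\<nu> \<Lambda> $ i * exp (\<Lambda> * \<xi>)) * exp (- \<rho> * \<xi>) \<le> k $ i * 1"
        using k_i \<nu>_i by (intro mult_mono) auto
      then show ?thesis using phi_i \<nu>_i by simp
    next
      case False
      have "min (k $ i) (\<nu> \<Lambda> $ i * exp (\<Lambda> * \<xi>)) * exp (- \<rho> * \<xi>)
              \<le> \<nu> \<Lambda> $ i * exp (\<Lambda> * \<xi>) * exp (- \<rho> * \<xi>)"
        by (intro mult_right_mono) auto
      also have "\<dots> = \<nu> \<Lambda> $ i * exp ((\<Lambda> - \<rho>) * \<xi>)"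
        by (simp add: mult.assoc flip: exp_add) (simp add: algebra_simps)
      also have "\<dots> \<le> \<nu> \<Lambda> $ i * 1"
        using False assms(4) \<nu>_i by (intro mult_left_mono) (auto simp: mult_nonneg_nonpos)
      finally show ?thesis using phi_i k_i by simp
    qed
  qed
  then show ?thesis
    using phi_plus_in_profiles[of k \<nu> \<Lambda>] assms(1,2) by (auto simp: E_rho_def profiles_def)
qed

theorem lemma4p5:
  fixes d :: "real^'n" and f fp fm :: "real^'n \<Rightarrow> real^'n"
    and k kp km :: "real^'n" and J :: "real^'n^'n"
    and blk :: "'n \<Rightarrow> nat" and m :: nat and \<nu> :: "real \<Rightarrow> real^'n"
    and c \<Lambda> \<beta> \<gamma> q \<rho> :: real
  assumes d_pos: "\<forall>i. d $ i > 0"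
    \<comment> \<open>(H1)\<close>
    and kp_pos: "pos_vec kp"
    and f_cont: "continuous_on {0..kp} f" and f_pw: "pw_C2_on {0..kp} f"
    and f_glob: "pde_global_solvable d f kp"
    and km_pos: "pos_vec km" and km_k: "km \<le> k" and k_kp: "k \<le> kp"
    and fp_cont: "continuous_on {0..kp} fp" and fp_pw: "pw_C2_on {0..kp} fp"
    and fm_cont: "continuous_on {0..km} fm" and fm_pw: "pw_C2_on {0..km} fm"
    and fm_le_f: "\<forall>u\<in>{0..km}. fm u \<le> f u"
    and f_le_fp: "\<forall>u\<in>{0..kp}. f u \<le> fp u"
    and f_0: "f 0 = 0" and f_k: "f k = 0"
    and fp_0: "fp 0 = 0" and fp_kp: "fp kp = 0"
    and fm_0: "fm 0 = 0" and fm_km: "fm km = 0"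
    and f_eq: "\<forall>u\<in>{0..k}. pos_vec u \<and> f u = 0 \<longrightarrow> u = k"
    and fp_eq: "\<forall>u\<in>{0..kp}. pos_vec u \<and> fp u = 0 \<longrightarrow> u = kp"
    and fm_eq: "\<forall>u\<in>{0..km}. pos_vec u \<and> fm u = 0 \<longrightarrow> u = km"
    and fp_coop: "cooperative_on {0..kp} {0..kp} fp"
    and fm_coop: "cooperative_on {0..km} {0..km} fm"
    and f_J: "(f has_derivative (\<lambda>h. J *v h)) (at 0 within {0..kp})"
    and fp_J: "(fp has_derivative (\<lambda>h. J *v h)) (at 0 within {0..kp})"
    and fm_J: "(fm has_derivative (\<lambda>h. J *v h)) (at 0 within {0..km})"
    and coop_case: "cooperative_on {0..kp} {0..kp} f \<longrightarrow>
                      (\<forall>u\<in>{0..kp}. fp u = f u) \<and> (\<forall>u\<in>{0..km}. fm u = f u) \<and> kp = k \<and> km = k"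
    \<comment> \<open>(H2)\<close>
    and blk_range: "blk ` UNIV = {..<m}"
    and lower_tri: "\<forall>lam>0. \<forall>i j. blk i < blk j \<longrightarrow> Amat d J lam $ i $ j = 0"
    and irred: "\<forall>lam>0. \<forall>p<m. card {i. blk i = p} \<ge> 2 \<longrightarrow>
                  (\<forall>i j. blk i = p \<and> blk j = p \<longrightarrow>
                     (i, j) \<in> {(a, b). blk a = p \<and> blk b = p \<and> a \<noteq> b \<and> Amat d J lam $ a $ b \<noteq> 0}\<^sup>+)"
    and first_block: "\<forall>lam>0. Psi_on {i. blk i = 0} (Amat d J lam) = Psi (Amat d J lam) \<and>
                         Psi (Amat d J lam) > 0 \<and>
                         (\<forall>p. 0 < p \<and> p < m \<longrightarrow> Psi_on {i. blk i = p} (Amat d J lam) < Psi (Amat d J lam))"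
    and nu_pos: "\<forall>lam>0. pos_vec (\<nu> lam)"
    and nu_eig: "\<forall>lam>0. Amat d J lam *v \<nu> lam = Psi (Amat d J lam) *\<^sub>R \<nu> lam"
    and nu_cont: "continuous_on {0<..} \<nu>"
    \<comment> \<open>(H3)\<close>
    and H3p: "\<forall>\<alpha>>0. \<forall>lam>0. \<alpha> *\<^sub>R \<nu> lam \<in> {0..kp} \<longrightarrow> fp (\<alpha> *\<^sub>R \<nu> lam) \<le> \<alpha> *\<^sub>R (J *v \<nu> lam)"
    and H3m: "\<forall>\<alpha>>0. \<forall>lam>0. \<alpha> *\<^sub>R \<nu> lam \<in> {0..km} \<longrightarrow> fm (\<alpha> *\<^sub>R \<nu> lam) \<le> \<alpha> *\<^sub>R (J *v \<nu> lam)"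
    \<comment> \<open>setup: speed c and \<Lambda>_c\<close>
    and c_gt: "c > cstar d J"
    and Lam_pos: "\<Lambda> > 0" and Lam_sol: "Phi d J \<Lambda> = c"
    and Lam_min: "\<forall>lam. 0 < lam \<and> lam < \<Lambda> \<longrightarrow> Phi d J lam \<noteq> c"
    \<comment> \<open>the constant \<beta>\<close>
    and beta_bd: "\<exists>M<\<beta>. \<forall>u\<in>{0..kp}. \<forall>L. (f has_derivative L) (at u within {0..kp}) \<longrightarrow>
                     (\<forall>i j. \<bar>L (axis i 1) $ j\<bar> \<le> M)"
    and lam_order: "\<forall>i. lam2 d c \<beta> i > lam1 d c \<beta> i \<and> lam1 d c \<beta> i > 2 * \<Lambda>"
    \<comment> \<open>upper and lower solutions\<close>
    and gamma: "1 < \<gamma>" "\<gamma> < 2" "Phi d J (\<gamma> * \<Lambda>) < c"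
    and gamma_pos: "\<forall>i. \<beta> * \<nu> (\<gamma> * \<Lambda>) $ i - \<nu> (\<gamma> * \<Lambda>) $ i * d $ i * (\<gamma> * \<Lambda>)\<^sup>2
                       + (\<Sum>j\<in>UNIV. \<nu> (\<gamma> * \<Lambda>) $ j * Amat d J (\<gamma> * \<Lambda>) $ i $ j) > 0"
    and q_gt: "q > 1"
    and phi_lt: "\<forall>\<xi> i. phi_minus \<nu> \<Lambda> \<gamma> q \<xi> $ i < phi_plus k \<nu> \<Lambda> \<xi> $ i"
    and lower_sol: "\<forall>\<xi> i. Top d c \<beta> f (phi_minus \<nu> \<Lambda> \<gamma> q) \<xi> $ i \<ge> phi_minus \<nu> \<Lambda> \<gamma> q \<xi> $ i"
    and upper_sol: "\<forall>\<xi> i. Top d c \<beta> f (phi_plus k \<nu> \<Lambda>) \<xi> $ i \<le> phi_plus k \<nu> \<Lambda> \<xi> $ i"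
    \<comment> \<open>the weight\<close>
    and rho: "0 < \<rho>" "\<rho> < \<Lambda>"
    \<comment> \<open>hypothesis of the lemma: f quasi-monotone on [0,k]\<close>
    and f_coop_k: "cooperative_on {0..kp} {0..k} f"
  shows "(\<forall>u v. u \<in> Aset \<rho> (phi_minus \<nu> \<Lambda> \<gamma> q) (phi_plus k \<nu> \<Lambda>) \<longrightarrow>
                v \<in> Aset \<rho> (phi_minus \<nu> \<Lambda> \<gamma> q) (phi_plus k \<nu> \<Lambda>) \<longrightarrow>
                (\<forall>\<xi>. u \<xi> \<le> v \<xi>) \<longrightarrow> (\<forall>\<xi>. Top d c \<beta> f u \<xi> \<le> Top d c \<beta> f v \<xi>))
       \<and> (\<forall>u \<in> Aset \<rho> (phi_minus \<nu> \<Lambda> \<gamma> q) (phi_plus k \<nu> \<Lambda>).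
                Top d c \<beta> f u \<in> Aset \<rho> (phi_minus \<nu> \<Lambda> \<gamma> q) (phi_plus k \<nu> \<Lambda>))
       \<and> (\<forall>u \<in> Aset \<rho> (phi_minus \<nu> \<Lambda> \<gamma> q) (phi_plus k \<nu> \<Lambda>).
                (\<forall>i. mono (\<lambda>\<xi>. u \<xi> $ i)) \<longrightarrow> (\<forall>i. mono (\<lambda>\<xi>. Top d c \<beta> f u \<xi> $ i)))"
proof -
  let ?A = "Aset \<rho> (phi_minus \<nu> \<Lambda> \<gamma> q) (phi_plus k \<nu> \<Lambda>)"
  let ?T = "Top d c \<beta> f"
  have k_pos: "\<forall>j. 0 < k $ j"
    using km_pos km_k by (auto simp: pos_vec_def less_eq_vec_def intro: less_le_trans)
  have lam1_pos: "\<forall>i. 0 < lam1 d c \<beta> i" and lam2_pos: "\<forall>i. 0 < lam2 d c \<beta> i"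
    using lam_order Lam_pos by (metis less_trans mult_pos_pos zero_less_numeral)+
  interpret wave_operator f k kp \<beta> d c
    by unfold_locales (fact k_pos k_kp f_cont f_pw f_coop_k beta_bd d_pos f_0 f_k lam1_pos lam2_pos)+
  have "0 \<le> k" "0 \<le> \<nu> \<Lambda>"
    using k_pos nu_pos Lam_pos by (auto simp: less_eq_vec_def pos_vec_def less_imp_le)
  then have php: "phi_plus k \<nu> \<Lambda> \<in> profiles k" "phi_plus k \<nu> \<Lambda> \<in> E_rho \<rho>"
    using phi_plus_in_profiles[of k \<nu> \<Lambda>] phi_plus_in_E_rho[of k \<nu> \<Lambda> \<rho>] rho by auto
  have phm: "phi_minus \<nu> \<Lambda> \<gamma> q \<in> profiles k"
    by (rule profiles_below[OF _ _ _ php(1)])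
       (use phi_lt in \<open>auto simp: phi_minus_def less_eq_vec_def less_imp_le intro!: continuous_intros\<close>)
  have A_profiles: "u \<in> profiles k" if "u \<in> ?A" for u
    using Aset_subset_profiles[OF phm php(1)] that by blast
  show ?thesis
  proof (intro conjI allI impI ballI)
    fix u v \<xi> assume "u \<in> ?A" "v \<in> ?A" "\<forall>\<xi>. u \<xi> \<le> v \<xi>"
    then show "?T u \<xi> \<le> ?T v \<xi>" using Top_mono A_profiles by blast
  next
    fix u assume "u \<in> ?A"
    with phm php lower_sol upper_sol show "?T u \<in> ?A"
      by (intro Top_preserves_Aset) (auto simp: less_eq_vec_def)
  next
    fix u i assume "u \<in> ?A" and u_mono: "\<forall>i. mono (\<lambda>\<xi>. u \<xi> $ i)"
    have "u x \<le> u y" if "x \<le> y" for x y using u_mono that by (simp add: mono_def less_eq_vec_def)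
    then show "mono (\<lambda>\<xi>. ?T u \<xi> $ i)"
      using Top_le[OF A_profiles A_profiles] \<open>u \<in> ?A\<close> by (intro monoI) simp
  qed
qed

end
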